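(* Let $\mathcal{C}$ be a category equipped with a faithful functor $Q:\mathcal{C}\to\mathbf{Set}$, and let $\Phi$ be a quasi-inner automorphism of $\mathcal{C}$, witnessed by a natural transformation $(\sigma_A:A\to\Phi(A))_{A\in\mathrm{Ob}\,\mathcal{C}}$ from the identity functor to $\Phi$ all of whose components are bimorphisms. If $\mu:A\to B$ and $\nu:\Phi(A)\to\Phi(B)$ are morphisms of $\mathcal{C}$ with $\sigma_B\circ\mu=\nu\circ\sigma_A$, then $\nu=\Phi(\mu)$. Consequently, for every morphism $\mu:A\to B$, $\Phi(\mu)$ is the unique morphism $\nu:\Phi(A)\to\Phi(B)$ such that $Q(\sigma_B)\circ Q(\mu)\circ (Q(\sigma_A))^{-1}\subseteq Q(\nu)$ (inclusion of relations), i.e. such that $Q(\nu)(Q(\sigma_A)(a))=Q(\sigma_B)(Q(\mu)(a))$ for all $a\in Q(A)$.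
   Context: A bimorphism is a morphism that is both a monomorphism and an epimorphism. An automorphism $\Phi$ of $\mathcal{C}$ is called quasi-inner if there exists a family of bimorphisms $\sigma_A:A\to\Phi(A)$, $A\in\mathrm{Ob}\,\mathcal{C}$, such that $\sigma_B\circ\mu=\Phi(\mu)\circ\sigma_A$ for every morphism $\mu:A\to B$ of $\mathcal{C}$. *)

theory Defs
  imports Main
begin

text \<open>A (small, explicitly carried) category: objects of type 'o, morphisms of type 'm.
  Comp g f denotes g after f.\<close>

record ('o, 'm) category =
  Obj  :: "'o set"
  Mor  :: "'m set"
  Dom  :: "'m \<Rightarrow> 'o"
  Cod  :: "'m \<Rightarrow> 'o"
  Comp :: "'m \<Rightarrow> 'm \<Rightarrow> 'm"
  Id   :: "'o \<Rightarrow> 'm"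

definition hom :: "('o, 'm) category \<Rightarrow> 'o \<Rightarrow> 'o \<Rightarrow> 'm set" where
  "hom C A B = {f \<in> Mor C. Dom C f = A \<and> Cod C f = B}"

definition is_category :: "('o, 'm) category \<Rightarrow> bool" where
  "is_category C \<longleftrightarrow>
     (\<forall>f \<in> Mor C. Dom C f \<in> Obj C \<and> Cod C f \<in> Obj C) \<and>
     (\<forall>A \<in> Obj C. Id C A \<in> hom C A A) \<and>
     (\<forall>f \<in> Mor C. \<forall>g \<in> Mor C. Cod C f = Dom C g \<longrightarrow>
         Comp C g f \<in> hom C (Dom C f) (Cod C g)) \<and>
     (\<forall>f \<in> Mor C. \<forall>g \<in> Mor C. \<forall>h \<in> Mor C.
         Cod C f = Dom C g \<longrightarrow> Cod C g = Dom C h \<longrightarrow>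
         Comp C h (Comp C g f) = Comp C (Comp C h g) f) \<and>
     (\<forall>f \<in> Mor C. Comp C (Id C (Cod C f)) f = f \<and> Comp C f (Id C (Dom C f)) = f)"

definition monomorphism :: "('o, 'm) category \<Rightarrow> 'm \<Rightarrow> bool" where
  "monomorphism C f \<longleftrightarrow> f \<in> Mor C \<and>
     (\<forall>g \<in> Mor C. \<forall>h \<in> Mor C. Cod C g = Dom C f \<longrightarrow> Cod C h = Dom C f \<longrightarrow>
        Dom C g = Dom C h \<longrightarrow> Comp C f g = Comp C f h \<longrightarrow> g = h)"

definition epimorphism :: "('o, 'm) category \<Rightarrow> 'm \<Rightarrow> bool" where
  "epimorphism C f \<longleftrightarrow> f \<in> Mor C \<and>
     (\<forall>g \<in> Mor C. \<forall>h \<in> Mor C. Dom C g = Cod C f \<longrightarrow> Dom C h = Cod C f \<longrightarrow>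
        Cod C g = Cod C h \<longrightarrow> Comp C g f = Comp C h f \<longrightarrow> g = h)"

definition bimorphism :: "('o, 'm) category \<Rightarrow> 'm \<Rightarrow> bool" where
  "bimorphism C f \<longleftrightarrow> monomorphism C f \<and> epimorphism C f"

definition endofunctor :: "('o, 'm) category \<Rightarrow> ('o \<Rightarrow> 'o) \<Rightarrow> ('m \<Rightarrow> 'm) \<Rightarrow> bool" where
  "endofunctor C Fo Fm \<longleftrightarrow>
     (\<forall>A \<in> Obj C. Fo A \<in> Obj C) \<and>
     (\<forall>f \<in> Mor C. Fm f \<in> hom C (Fo (Dom C f)) (Fo (Cod C f))) \<and>
     (\<forall>f \<in> Mor C. \<forall>g \<in> Mor C. Cod C f = Dom C g \<longrightarrow>
         Fm (Comp C g f) = Comp C (Fm g) (Fm f)) \<and>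
     (\<forall>A \<in> Obj C. Fm (Id C A) = Id C (Fo A))"

definition automorphism :: "('o, 'm) category \<Rightarrow> ('o \<Rightarrow> 'o) \<Rightarrow> ('m \<Rightarrow> 'm) \<Rightarrow> bool" where
  "automorphism C Fo Fm \<longleftrightarrow> endofunctor C Fo Fm \<and>
     bij_betw Fo (Obj C) (Obj C) \<and> bij_betw Fm (Mor C) (Mor C)"

definition quasi_inner_witness ::
  "('o, 'm) category \<Rightarrow> ('o \<Rightarrow> 'o) \<Rightarrow> ('m \<Rightarrow> 'm) \<Rightarrow> ('o \<Rightarrow> 'm) \<Rightarrow> bool" where
  "quasi_inner_witness C Fo Fm \<sigma> \<longleftrightarrow>
     (\<forall>A \<in> Obj C. \<sigma> A \<in> hom C A (Fo A) \<and> bimorphism C (\<sigma> A)) \<and>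
     (\<forall>\<mu> \<in> Mor C. Comp C (\<sigma> (Cod C \<mu>)) \<mu> = Comp C (Fm \<mu>) (\<sigma> (Dom C \<mu>)))"

definition quasi_inner :: "('o, 'm) category \<Rightarrow> ('o \<Rightarrow> 'o) \<Rightarrow> ('m \<Rightarrow> 'm) \<Rightarrow> bool" where
  "quasi_inner C Fo Fm \<longleftrightarrow> automorphism C Fo Fm \<and> (\<exists>\<sigma>. quasi_inner_witness C Fo Fm \<sigma>)"

text \<open>A functor Q : C \<rightarrow> Set, with sets of elements of a type 'x: QO A is the set Q(A),
  QM f is the function Q(f), considered only on QO (Dom f) (maps are identified
  extensionally on their domain).\<close>

definition set_functor :: "('o, 'm) category \<Rightarrow> ('o \<Rightarrow> 'x set) \<Rightarrow> ('m \<Rightarrow> 'x \<Rightarrow> 'x) \<Rightarrow> bool" where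
  "set_functor C QO QM \<longleftrightarrow>
     (\<forall>f \<in> Mor C. \<forall>x \<in> QO (Dom C f). QM f x \<in> QO (Cod C f)) \<and>
     (\<forall>f \<in> Mor C. \<forall>g \<in> Mor C. Cod C f = Dom C g \<longrightarrow>
         (\<forall>x \<in> QO (Dom C f). QM (Comp C g f) x = QM g (QM f x))) \<and>
     (\<forall>A \<in> Obj C. \<forall>x \<in> QO A. QM (Id C A) x = x)"

definition faithful_set_functor :: "('o, 'm) category \<Rightarrow> ('o \<Rightarrow> 'x set) \<Rightarrow> ('m \<Rightarrow> 'x \<Rightarrow> 'x) \<Rightarrow> bool" where
  "faithful_set_functor C QO QM \<longleftrightarrow> set_functor C QO QM \<and>
     (\<forall>A \<in> Obj C. \<forall>B \<in> Obj C. \<forall>f \<in> hom C A B. \<forall>g \<in> hom C A B.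
        (\<forall>x \<in> QO A. QM f x = QM g x) \<longrightarrow> f = g)"

end

theory Submission
  imports Defs
begin

text \<open>Naturality of \<sigma> says that \<open>Fm \<mu>\<close> solves \<open>\<sigma>\<^sub>B \<circ> \<mu> = \<nu> \<circ> \<sigma>\<^sub>A\<close>, and since \<open>\<sigma>\<^sub>A\<close> is an
  epimorphism this equation has at most one solution \<open>\<nu>\<close>. A faithful functor to sets
  reflects equality of parallel morphisms, so the equation may equivalently be checked
  elementwise after applying Q.\<close>

lemma hom_Mor: "f \<in> hom C A B \<Longrightarrow> f \<in> Mor C \<and> Dom C f = A \<and> Cod C f = B"
  by (simp add: hom_def)

lemma hom_Obj:
  assumes "is_category C" and "f \<in> hom C A B"
  shows "A \<in> Obj C" and "B \<in> Obj C"
  using assms by (auto simp: is_category_def hom_def)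

lemma Comp_hom:
  assumes "is_category C" and "f \<in> hom C A B" and "g \<in> hom C B D"
  shows "Comp C g f \<in> hom C A D"
  using assms by (auto simp: is_category_def hom_def)

lemma epimorphism_cancel:
  assumes "epimorphism C f" and "g \<in> hom C (Cod C f) D" and "h \<in> hom C (Cod C f) D"
    and "Comp C g f = Comp C h f"
  shows "g = h"
  using assms by (auto simp: epimorphism_def hom_def)

lemma endofunctor_hom:
  assumes "endofunctor C Fo Fm" and "\<mu> \<in> hom C A B"
  shows "Fm \<mu> \<in> hom C (Fo A) (Fo B)"
  using assms by (auto simp: endofunctor_def hom_def)

lemma quasi_inner_witness_hom:
  assumes "quasi_inner_witness C Fo Fm \<sigma>" and "A \<in> Obj C"
  shows "\<sigma> A \<in> hom C A (Fo A)"
  using assms by (simp add: quasi_inner_witness_def)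

lemma quasi_inner_witness_epimorphism:
  assumes "quasi_inner_witness C Fo Fm \<sigma>" and "A \<in> Obj C"
  shows "epimorphism C (\<sigma> A)"
  using assms by (simp add: quasi_inner_witness_def bimorphism_def)

lemma quasi_inner_witness_natural:
  assumes "quasi_inner_witness C Fo Fm \<sigma>" and "\<mu> \<in> hom C A B"
  shows "Comp C (\<sigma> B) \<mu> = Comp C (Fm \<mu>) (\<sigma> A)"
  using assms by (auto simp: quasi_inner_witness_def hom_def)

lemma quasi_inner_witness_unique_lift:
  assumes "is_category C" and "endofunctor C Fo Fm" and "quasi_inner_witness C Fo Fm \<sigma>"
    and \<mu>: "\<mu> \<in> hom C A B" and \<nu>: "\<nu> \<in> hom C (Fo A) (Fo B)"
    and eq: "Comp C (\<sigma> B) \<mu> = Comp C \<nu> (\<sigma> A)"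
  shows "\<nu> = Fm \<mu>"
proof -
  have A: "A \<in> Obj C" using hom_Obj(1)[OF assms(1) \<mu>] .
  have "Cod C (\<sigma> A) = Fo A"
    using hom_Mor[OF quasi_inner_witness_hom[OF assms(3) A]] by simp
  moreover have "Comp C \<nu> (\<sigma> A) = Comp C (Fm \<mu>) (\<sigma> A)"
    using eq quasi_inner_witness_natural[OF assms(3) \<mu>] by simp
  ultimately show ?thesis
    using epimorphism_cancel[OF quasi_inner_witness_epimorphism[OF assms(3) A]]
      \<nu> endofunctor_hom[OF assms(2) \<mu>] by simp
qed

lemma set_functor_Comp:
  assumes "set_functor C QO QM" and "f \<in> hom C A B" and "g \<in> hom C B D" and "x \<in> QO A"
  shows "QM (Comp C g f) x = QM g (QM f x)"
  using assms by (auto simp: set_functor_def hom_def)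

lemma faithful_set_functor_eqI:
  assumes "faithful_set_functor C QO QM" and "A \<in> Obj C" and "B \<in> Obj C"
    and "f \<in> hom C A B" and "g \<in> hom C A B" and "\<And>x. x \<in> QO A \<Longrightarrow> QM f x = QM g x"
  shows "f = g"
  using assms unfolding faithful_set_functor_def by blast

lemma faithful_set_functor_Comp_eq_iff:
  assumes "is_category C" and Q: "faithful_set_functor C QO QM"
    and f: "f \<in> hom C A B" and g: "g \<in> hom C B D"
    and f': "f' \<in> hom C A B'" and g': "g' \<in> hom C B' D"
  shows "Comp C g f = Comp C g' f' \<longleftrightarrow> (\<forall>x \<in> QO A. QM g (QM f x) = QM g' (QM f' x))"
proof -
  have Q': "set_functor C QO QM" using Q by (simp add: faithful_set_functor_def)
  have "Comp C g f \<in> hom C A D" and "Comp C g' f' \<in> hom C A D"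
    using Comp_hom[OF assms(1) f g] Comp_hom[OF assms(1) f' g'] .
  moreover have "A \<in> Obj C" and "D \<in> Obj C"
    using hom_Obj[OF assms(1) f] hom_Obj[OF assms(1) g] by simp_all
  ultimately have "Comp C g f = Comp C g' f' \<longleftrightarrow>
      (\<forall>x \<in> QO A. QM (Comp C g f) x = QM (Comp C g' f') x)"
    using faithful_set_functor_eqI[OF Q] by metis
  then show ?thesis
    using set_functor_Comp[OF Q' f g] set_functor_Comp[OF Q' f' g'] by simp
qed

theorem lemma1:
  fixes C :: "('o, 'm) category"
    and QO :: "'o \<Rightarrow> 'x set" and QM :: "'m \<Rightarrow> 'x \<Rightarrow> 'x"
    and Fo :: "'o \<Rightarrow> 'o" and Fm :: "'m \<Rightarrow> 'm" and \<sigma> :: "'o \<Rightarrow> 'm"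
  assumes "is_category C"
    and "faithful_set_functor C QO QM"
    and "automorphism C Fo Fm"
    and "quasi_inner_witness C Fo Fm \<sigma>"
  shows "(\<forall>A B \<mu> \<nu>. \<mu> \<in> hom C A B \<longrightarrow> \<nu> \<in> hom C (Fo A) (Fo B) \<longrightarrow>
            Comp C (\<sigma> B) \<mu> = Comp C \<nu> (\<sigma> A) \<longrightarrow> \<nu> = Fm \<mu>)
       \<and> (\<forall>A B \<mu>. \<mu> \<in> hom C A B \<longrightarrow>
            (\<exists>!\<nu>. \<nu> \<in> hom C (Fo A) (Fo B) \<and>
               (\<forall>a \<in> QO A. QM \<nu> (QM (\<sigma> A) a) = QM (\<sigma> B) (QM \<mu> a)))
            \<and> Fm \<mu> \<in> hom C (Fo A) (Fo B)
            \<and> (\<forall>a \<in> QO A. QM (Fm \<mu>) (QM (\<sigma> A) a) = QM (\<sigma> B) (QM \<mu> a)))"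
proof -
  have F: "endofunctor C Fo Fm" using assms(3) by (simp add: automorphism_def)
  have lift: "\<nu> = Fm \<mu>"
    if "\<mu> \<in> hom C A B" "\<nu> \<in> hom C (Fo A) (Fo B)" "Comp C (\<sigma> B) \<mu> = Comp C \<nu> (\<sigma> A)"
    for A B \<mu> \<nu>
    using quasi_inner_witness_unique_lift[OF assms(1) F assms(4)] that .
  have elementwise: "Comp C (\<sigma> B) \<mu> = Comp C \<nu> (\<sigma> A) \<longleftrightarrow>
      (\<forall>a \<in> QO A. QM \<nu> (QM (\<sigma> A) a) = QM (\<sigma> B) (QM \<mu> a))"
    if \<mu>: "\<mu> \<in> hom C A B" and "\<nu> \<in> hom C (Fo A) (Fo B)" for A B \<mu> \<nu>
    using faithful_set_functor_Comp_eq_iff[OF assms(1,2) \<mu> _ _ \<open>\<nu> \<in> _\<close>]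
      quasi_inner_witness_hom[OF assms(4)] hom_Obj[OF assms(1) \<mu>] by fastforce
  show ?thesis
  proof (intro conjI allI impI)
    fix A B \<mu>
    assume \<mu>: "\<mu> \<in> hom C A B"
    have F\<mu>: "Fm \<mu> \<in> hom C (Fo A) (Fo B)" using endofunctor_hom[OF F \<mu>] .
    have nat: "Comp C (\<sigma> B) \<mu> = Comp C (Fm \<mu>) (\<sigma> A)"
      using quasi_inner_witness_natural[OF assms(4) \<mu>] .
    show "\<forall>a \<in> QO A. QM (Fm \<mu>) (QM (\<sigma> A) a) = QM (\<sigma> B) (QM \<mu> a)"
      using elementwise[OF \<mu> F\<mu>] nat by simp
    then show "\<exists>!\<nu>. \<nu> \<in> hom C (Fo A) (Fo B) \<and>
        (\<forall>a \<in> QO A. QM \<nu> (QM (\<sigma> A) a) = QM (\<sigma> B) (QM \<mu> a))"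
      using F\<mu> lift[OF \<mu>] elementwise[OF \<mu>] by blast
    show "Fm \<mu> \<in> hom C (Fo A) (Fo B)" using F\<mu> .
  qed (rule lift)
qed

end
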